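(* Let $q=p^f\geq 5$ with $p$ an odd prime, and let $I=\{0,\ f/\gcd(3,f),\ 2f/\gcd(3,f)\}$. Let $b\in\mathbb{F}_{q^2}^\times$ with $b+b^q=1$ and $b\neq b^q$, and let $a\in\mathbb{F}_{q^2}^\times$ be an element of order $q-1$ such that $(a+a^{-1}+1)^{p^i}\neq a+a^{-1}b^{q+1}$ for all $i\in I$, $(a+a^{-1}+1)^{p^i}\neq 1+b^{q+1}$ for all $i\in I$, and $a+a^{-1}b^{q+1}\neq 1+b^{q+1}$. Let \[ X=\begin{pmatrix}-b^q&b&b^{q+1}\\ 1&0&b^q\\ 1&1&-b\end{pmatrix},\quad Y=\begin{pmatrix}0&0&a\\ 0&-1&0\\ a^{-1}&0&0\end{pmatrix},\quad Z=\begin{pmatrix}0&0&1\\ 0&-1&0\\ 1&0&0\end{pmatrix}. \] Then $\langle X,Y,Z\rangle$ is an irreducible subgroup of $\mathrm{SU}_3(q)$, i.e. it stabilizes no subspace of $\mathbb{F}_{q^2}^3$ of dimension $1$ or $2$.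
   Context: Here $\mathrm{SU}_3(q)=\{A\in\mathrm{SL}_3(q^2): \overline{A}^{T}WA=W\}$, where $\overline{(a_{ij})}=(a_{ij}^q)$ and $W=\begin{pmatrix}0&0&1\\0&1&0\\1&0&0\end{pmatrix}$; matrices act on row vectors in $\mathbb{F}_{q^2}^3$ by right multiplication. *)

theory Defs
  imports "HOL-Analysis.Analysis"
begin

definition frobm :: "nat \<Rightarrow> 'a::field^3^3 \<Rightarrow> 'a^3^3" where
  "frobm q A = (\<chi> i j. (A$i$j) ^ q)"

definition Wmat :: "'a::field^3^3" where
  "Wmat = vector [vector [0,0,1], vector [0,1,0], vector [1,0,0]]"

text \<open>SU_3(q) inside SL_3 of a field 'a (intended: 'a = F_{q^2}).\<close>
definition SU3 :: "nat \<Rightarrow> ('a::field^3^3) set" where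
  "SU3 q = {A. det A = 1 \<and> transpose (frobm q A) ** Wmat ** A = Wmat}"

inductive_set gen_group :: "('a::field^3^3) set \<Rightarrow> ('a^3^3) set" for S where
  one: "mat 1 \<in> gen_group S"
| gen: "g \<in> S \<Longrightarrow> g \<in> gen_group S"
| mult: "g \<in> gen_group S \<Longrightarrow> h \<in> gen_group S \<Longrightarrow> g ** h \<in> gen_group S"
| inv: "g \<in> gen_group S \<Longrightarrow> matrix_inv g \<in> gen_group S"

definition elem_order :: "'a::field \<Rightarrow> nat" where
  "elem_order x = (LEAST n. 0 < n \<and> x ^ n = 1)"

definition irreducible3 :: "('a::field^3^3) set \<Rightarrow> bool" where
  "irreducible3 G \<longleftrightarrow> (\<forall>U :: ('a^3) set. vec.subspace U \<and> vec.dim U \<in> {1,2} \<longrightarrow>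
      \<not> (\<forall>g\<in>G. \<forall>v\<in>U. v v* g \<in> U))"

end

theory Submission
  imports Defs "HOL-Number_Theory.Residues"
begin

(* Membership in SU_3(q): the unitary condition for X, Y, Z is a direct computation using
   b^q = 1 - b, b^(q^2) = b and a^q = a, and since x \<mapsto> x^q is additive on F_(q^2) the twist
   A \<mapsto> (a_ij^q) is multiplicative, so SU_3(q) is closed under products and inverses.

   Irreducibility: let U be a nonzero invariant subspace. Combining a nonzero u \<in> U with uZ, uY
   or uX yields a nonzero w \<in> U with w_2 = 0. Then w and wZ (or w and wY, using a^2 \<noteq> 1) span
   the plane w_2 = 0, so e_1, e_3 \<in> U, and e_1 X + b^q e_1 - b^(q+1) e_3 = b e_2 gives e_2 \<in> U. *)

lemma power_card_minus_one_eq_one: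
  fixes x :: "'a::{field,finite}"
  assumes "x \<noteq> 0"
  shows "x ^ (CARD('a) - 1) = 1"
proof -
  let ?N = "UNIV - {0} :: 'a set"
  have bij: "bij_betw ((*) x) ?N ?N"
    using assms by (intro bij_betwI[where g = "\<lambda>y. y / x"]) auto
  have "x ^ card ?N * \<Prod>?N = (\<Prod>y\<in>?N. x * y)"
    by (simp add: prod.distrib)
  also have "\<dots> = \<Prod>?N"
    using prod.reindex_bij_betw[OF bij, of id] by simp
  finally have "x ^ card ?N * \<Prod>?N = 1 * \<Prod>?N" by simp
  moreover have "\<Prod>?N \<noteq> 0" by simp
  moreover have "card ?N = CARD('a) - 1" by (simp add: card_Diff_singleton)
  ultimately show ?thesis by simp
qed

lemma power_card_eq_self:
  fixes x :: "'a::{field,finite}"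
  shows "x ^ CARD('a) = x"
proof (cases "x = 0")
  case False
  then show ?thesis
    using power_minus_mult[of "CARD('a)" x] power_card_minus_one_eq_one[OF False] by simp
qed simp

lemma CHAR_eq_prime_if_card_eq_power:
  assumes "prime p" and "CARD('a::{field,finite}) = p ^ n"
  shows "CHAR('a) = p"
proof -
  have "prime CHAR('a)"
    by (intro prime_CHAR_semidom finite_imp_CHAR_pos) simp
  moreover have "CHAR('a) dvd p ^ n"
    using CHAR_dvd_CARD[where 'a = 'a] assms(2) by simp
  ultimately show ?thesis
    using assms(1) by (meson prime_dvd_power primes_dvd_imp_eq)
qed

lemma add_power_prime_power_finite_field:
  fixes x y :: "'a::{field,finite}"
  assumes "prime p" and "CARD('a) = p ^ n"
  shows "(x + y) ^ (p ^ k) = x ^ (p ^ k) + y ^ (p ^ k)"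
  using CHAR_eq_prime_if_card_eq_power[OF assms] assms(1)
  by (intro freshmans_dream') simp_all

lemma one_less_card_field: "1 < CARD('a::{field,finite})"
proof -
  have "card {0, 1 :: 'a} \<le> CARD('a)" by (rule card_mono) auto
  then show ?thesis by simp
qed

lemma elem_order_power_eq_one:
  fixes x :: "'a::{field,finite}"
  assumes "x \<noteq> 0"
  shows "x ^ elem_order x = 1"
  unfolding elem_order_def
proof (rule LeastI_ex[where P = "\<lambda>n. 0 < n \<and> x ^ n = 1", THEN conjunct2])
  show "\<exists>n. 0 < n \<and> x ^ n = 1"
    using one_less_card_field[where 'a = 'a] power_card_minus_one_eq_one[OF assms]
    by (intro exI[of _ "CARD('a) - 1"]) simp
qed

lemma elem_order_le:
  assumes "0 < n" and "x ^ n = 1"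
  shows "elem_order x \<le> n"
  unfolding elem_order_def using assms by (intro Least_le) simp

lemma frobm_mult:
  assumes "\<And>x y::'a::field. (x + y) ^ q = x ^ q + y ^ q"
  shows "frobm q (A ** B) = frobm q (A::'a^3^3) ** frobm q B"
  unfolding frobm_def matrix_matrix_mult_def
  by (simp add: vec_eq_iff sum_3 assms power_mult_distrib)

lemma frobm_mat_1:
  assumes "q > 0"
  shows "frobm q (mat 1 :: 'a::field^3^3) = mat 1"
  using assms unfolding frobm_def mat_def by (simp add: vec_eq_iff)

lemma frobm_vector:
  "frobm q (vector [vector [x11, x12, x13], vector [x21, x22, x23], vector [x31, x32, x33]] :: 'a::field^3^3)
   = vector [vector [x11^q, x12^q, x13^q], vector [x21^q, x22^q, x23^q], vector [x31^q, x32^q, x33^q]]"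
  by (simp add: frobm_def vec_eq_iff forall_3)

lemma mat_1_in_SU3:
  assumes "q > 0"
  shows "(mat 1 :: 'a::field^3^3) \<in> SU3 q"
  using assms by (simp add: SU3_def frobm_mat_1 transpose_mat)

lemma SU3_mult:
  assumes "\<And>x y::'a::field. (x + y) ^ q = x ^ q + y ^ q"
    and A: "(A::'a^3^3) \<in> SU3 q" and B: "B \<in> SU3 q"
  shows "A ** B \<in> SU3 q"
proof -
  have "transpose (frobm q (A ** B)) ** Wmat ** (A ** B)
     = transpose (frobm q B) ** (transpose (frobm q A) ** Wmat ** A) ** B"
    by (simp add: frobm_mult[OF assms(1)] matrix_transpose_mul matrix_mul_assoc)
  also have "\<dots> = Wmat" using A B by (simp add: SU3_def matrix_mul_assoc)
  finally show ?thesis using A B by (simp add: SU3_def det_mul)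
qed

lemma matrix_mul_matrix_inv:
  assumes "invertible A"
  shows "A ** matrix_inv A = mat 1"
  using assms unfolding invertible_def matrix_inv_def by (metis (mono_tags, lifting) someI_ex)

lemma SU3_matrix_inv:
  assumes "\<And>x y::'a::field. (x + y) ^ q = x ^ q + y ^ q" and "q > 0"
    and A: "(A::'a^3^3) \<in> SU3 q"
  shows "matrix_inv A \<in> SU3 q"
proof -
  define B where "B = matrix_inv A"
  have "invertible A" using A by (simp add: SU3_def invertible_det_nz)
  then have AB: "A ** B = mat 1"
    by (simp add: B_def matrix_mul_matrix_inv)
  then have "det A * det B = 1" by (metis det_mul det_I)
  then have "det B = 1" using A by (simp add: SU3_def)
  have "transpose (frobm q B) ** Wmat ** B
     = transpose (frobm q B) ** (transpose (frobm q A) ** Wmat ** A) ** B"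
    using A by (simp add: SU3_def)
  also have "\<dots> = transpose (frobm q (A ** B)) ** Wmat ** (A ** B)"
    by (simp add: frobm_mult[OF assms(1)] matrix_transpose_mul matrix_mul_assoc)
  also have "\<dots> = Wmat"
    using assms(2) by (simp add: AB frobm_mat_1 transpose_mat)
  finally show ?thesis using \<open>det B = 1\<close> by (simp add: SU3_def B_def)
qed

lemma gen_group_subset:
  assumes "S \<subseteq> H" and "mat 1 \<in> H"
    and "\<And>g h. g \<in> H \<Longrightarrow> h \<in> H \<Longrightarrow> g ** h \<in> H"
    and "\<And>g. g \<in> H \<Longrightarrow> matrix_inv g \<in> H"
  shows "gen_group S \<subseteq> H"
proof
  fix g assume "g \<in> gen_group S"
  then show "g \<in> H"
    by (induction rule: gen_group.induct) (use assms in auto)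
qed

lemma gen_group_subset_SU3:
  assumes "\<And>x y::'a::field. (x + y) ^ q = x ^ q + y ^ q" and "q > 0"
    and "S \<subseteq> (SU3 q :: ('a^3^3) set)"
  shows "gen_group S \<subseteq> SU3 q"
  using assms by (intro gen_group_subset mat_1_in_SU3) (auto intro: SU3_mult SU3_matrix_inv)

(* X = Xmat b (b^q) (b^(q+1)) and Z = Ymat 1 *)
definition Xmat :: "'a::field \<Rightarrow> 'a \<Rightarrow> 'a \<Rightarrow> 'a^3^3" where
  "Xmat b c d = vector [vector [- c, b, d], vector [1, 0, c], vector [1, 1, - b]]"

definition Ymat :: "'a::field \<Rightarrow> 'a^3^3" where
  "Ymat a = vector [vector [0, 0, a], vector [0, -1, 0], vector [inverse a, 0, 0]]"

lemma frobm_Xmat: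
  fixes b c :: "'a::field"
  assumes "odd q" and "b ^ q = c" and "c ^ q = b"
  shows "frobm q (Xmat b c (b * c)) = Xmat c b (b * c)"
  using assms by (simp add: Xmat_def frobm_vector power_mult_distrib zero_power odd_pos mult.commute)

lemma Xmat_in_SU3:
  fixes b c :: "'a::field"
  assumes "odd q" and "b ^ q = c" and "c ^ q = b" and "b + c = 1"
  shows "Xmat b c (b * c) \<in> SU3 q"
proof -
  have b: "b = 1 - c" using assms(4) by (simp add: algebra_simps)
  have "det (Xmat b c (b * c)) = 1"
    unfolding Xmat_def b det_3 by (simp add: algebra_simps)
  moreover have "transpose (Xmat c b (b * c)) ** Wmat ** Xmat b c (b * c) = Wmat"
    unfolding Xmat_def Wmat_def b
    by (simp add: vec_eq_iff forall_3 sum_3 matrix_matrix_mult_def transpose_def algebra_simps)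
  ultimately show ?thesis
    using assms by (simp add: SU3_def frobm_Xmat)
qed

lemma Ymat_in_SU3:
  fixes a :: "'a::field"
  assumes "odd q" and "a \<noteq> 0" and "a ^ q = a"
  shows "Ymat a \<in> SU3 q"
proof -
  have "frobm q (Ymat a) = Ymat a"
    using assms by (simp add: Ymat_def frobm_vector zero_power odd_pos power_inverse)
  moreover have "det (Ymat a) = 1"
    using assms(2) by (simp add: Ymat_def det_3)
  moreover have "transpose (Ymat a) ** Wmat ** Ymat a = Wmat"
    using assms(2)
    by (simp add: Ymat_def Wmat_def vec_eq_iff forall_3 sum_3 matrix_matrix_mult_def transpose_def)
  ultimately show ?thesis by (simp add: SU3_def)
qed

lemma vector_matrix_mult_Xmat:
  "v v* Xmat b c d = vector [- c * v$1 + v$2 + v$3, b * v$1 + v$3, d * v$1 + c * v$2 - b * v$3]"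
  by (simp add: Xmat_def vector_matrix_mult_def sum_3 vec_eq_iff forall_3 algebra_simps)

lemma vector_matrix_mult_Ymat:
  "v v* Ymat a = vector [inverse a * v$3, - v$2, a * v$1]"
  by (simp add: Ymat_def vector_matrix_mult_def sum_3 vec_eq_iff forall_3 algebra_simps)

lemma axes_13_in_subspace:
  fixes U :: "('a::field^3) set"
  assumes "vec.subspace U" and "v \<in> U" and "w \<in> U"
    and "v$2 = 0" and "w$2 = 0" and "v$1 * w$3 - w$1 * v$3 \<noteq> 0"
  shows "axis 1 1 \<in> U" and "axis 3 1 \<in> U"
proof -
  define D where "D = v$1 * w$3 - w$1 * v$3"
  have "D \<noteq> 0" using assms(6) by (simp add: D_def)
  have "(w$3 / D) *s v - (v$3 / D) *s w \<in> U" and "(v$1 / D) *s w - (w$1 / D) *s v \<in> U"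
    using assms by (auto intro!: vec.subspace_diff vec.subspace_scale)
  moreover have "(w$3 / D) *s v - (v$3 / D) *s w = axis 1 1"
    and "(v$1 / D) *s w - (w$1 / D) *s v = axis 3 1"
    using \<open>D \<noteq> 0\<close> assms(4,5)
    by (simp_all add: vec_eq_iff forall_3 axis_def field_simps) (simp_all add: D_def algebra_simps)
  ultimately show "axis 1 1 \<in> U" and "axis 3 1 \<in> U" by simp_all
qed

lemma axes_13_in_invariant_subspace:
  fixes U :: "('a::field^3) set"
  assumes U: "vec.subspace U"
    and Y: "\<And>v. v \<in> U \<Longrightarrow> v v* Ymat a \<in> U" and Z: "\<And>v. v \<in> U \<Longrightarrow> v v* Ymat 1 \<in> U"
    and "a \<noteq> 0" and "a * a \<noteq> 1"
    and w: "w \<in> U" "w$2 = 0" "w \<noteq> 0"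
  shows "axis 1 1 \<in> U \<and> axis 3 1 \<in> U"
proof (cases "w$1 * w$1 = w$3 * w$3")
  case False
  then show ?thesis
    using axes_13_in_subspace[OF U w(1) Z[OF w(1)]] w(2)
    by (simp add: vector_matrix_mult_Ymat)
next
  case True
  have "w$1 \<noteq> 0"
    using True w(2,3) by (auto simp: vec_eq_iff forall_3)
  moreover have "a - inverse a \<noteq> 0"
    using \<open>a \<noteq> 0\<close> \<open>a * a \<noteq> 1\<close> by (metis right_inverse right_minus_eq)
  moreover have "w$1 * (a * w$1) - inverse a * w$3 * w$3 = (a - inverse a) * (w$1 * w$1)"
    by (simp add: algebra_simps flip: True)
  ultimately have "w$1 * (a * w$1) - inverse a * w$3 * w$3 \<noteq> 0"
    by simp
  then show ?thesis
    using axes_13_in_subspace[OF U w(1) Y[OF w(1)]] w(2)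
    by (simp add: vector_matrix_mult_Ymat)
qed

lemma invariant_subspace_meets_plane:
  fixes U :: "('a::field^3) set"
  assumes U: "vec.subspace U" and X: "\<And>v. v \<in> U \<Longrightarrow> v v* Xmat b c d \<in> U"
    and Y: "\<And>v. v \<in> U \<Longrightarrow> v v* Ymat a \<in> U" and Z: "\<And>v. v \<in> U \<Longrightarrow> v v* Ymat 1 \<in> U"
    and "a \<noteq> 1" and u: "u \<in> U" "u \<noteq> 0"
  obtains w where "w \<in> U" and "w$2 = 0" and "w \<noteq> 0"
proof -
  consider "u$1 + u$3 \<noteq> 0" | "u$1 + u$3 = 0" "u$1 \<noteq> 0" | "u$1 = 0" "u$3 = 0"
    by fastforce
  then show thesis
  proof cases
    case 1
    have "u + u v* Ymat 1 \<in> U" using U u Z by (simp add: vec.subspace_add)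
    moreover have "(u + u v* Ymat 1)$2 = 0" and "(u + u v* Ymat 1)$1 = u$1 + u$3"
      by (simp_all add: vector_matrix_mult_Ymat)
    ultimately show thesis using 1 that by (metis zero_index)
  next
    case 2
    have "u v* Ymat a - u v* Ymat 1 \<in> U" using U u Y Z by (simp add: vec.subspace_diff)
    moreover have "(u v* Ymat a - u v* Ymat 1)$2 = 0"
      and "(u v* Ymat a - u v* Ymat 1)$3 = (a - 1) * u$1"
      by (simp_all add: vector_matrix_mult_Ymat algebra_simps)
    ultimately show thesis using 2 \<open>a \<noteq> 1\<close> that by (metis zero_index mult_eq_0_iff right_minus_eq)
  next
    case 3
    then have "u$2 \<noteq> 0" using u(2) by (simp add: vec_eq_iff forall_3)
    moreover have "(u v* Xmat b c d)$2 = 0" and "(u v* Xmat b c d)$1 = u$2"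
      using 3 by (simp_all add: vector_matrix_mult_Xmat)
    ultimately show thesis using X[OF u(1)] that by (metis zero_index)
  qed
qed

lemma invariant_subspace_eq_UNIV:
  fixes U :: "('a::field^3) set"
  assumes U: "vec.subspace U" and X: "\<And>v. v \<in> U \<Longrightarrow> v v* Xmat b c d \<in> U"
    and Y: "\<And>v. v \<in> U \<Longrightarrow> v v* Ymat a \<in> U" and Z: "\<And>v. v \<in> U \<Longrightarrow> v v* Ymat 1 \<in> U"
    and "a \<noteq> 0" and "a * a \<noteq> 1" and "b \<noteq> 0" and "U \<noteq> {0}"
  shows "U = UNIV"
proof -
  obtain u where "u \<in> U" "u \<noteq> 0"
    using \<open>U \<noteq> {0}\<close> vec.subspace_0[OF U] by blast
  moreover have "a \<noteq> 1" using \<open>a * a \<noteq> 1\<close> by auto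
  ultimately obtain w where "w \<in> U" "w$2 = 0" "w \<noteq> 0"
    using invariant_subspace_meets_plane[OF U X Y Z] by blast
  then have e1: "axis 1 1 \<in> U" and e3: "axis 3 1 \<in> U"
    using axes_13_in_invariant_subspace[OF U Y Z \<open>a \<noteq> 0\<close> \<open>a * a \<noteq> 1\<close>] by auto
  have "(1 / b) *s (axis 1 1 v* Xmat b c d + c *s axis 1 1 - d *s axis 3 1) \<in> U"
    using U X[OF e1] e1 e3 by (intro vec.subspace_scale vec.subspace_add vec.subspace_diff) auto
  moreover have "(1 / b) *s (axis 1 1 v* Xmat b c d + c *s axis 1 1 - d *s axis 3 1) = axis 2 1"
    using \<open>b \<noteq> 0\<close> by (simp add: vector_matrix_mult_Xmat vec_eq_iff forall_3 axis_def)
  ultimately have e2: "axis 2 1 \<in> U" by simp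
  have "v$1 *s axis 1 1 + v$2 *s axis 2 1 + v$3 *s axis 3 1 \<in> U" for v :: "'a^3"
    using U e1 e2 e3 by (intro vec.subspace_scale vec.subspace_add) auto
  moreover have "v$1 *s axis 1 1 + v$2 *s axis 2 1 + v$3 *s axis 3 1 = v" for v :: "'a^3"
    by (simp add: vec_eq_iff forall_3 axis_def)
  ultimately show ?thesis by (metis UNIV_eq_I)
qed

lemma irreducible3_gen_group_Xmat_Ymat:
  fixes a b c d :: "'a::field"
  assumes "a \<noteq> 0" and "a * a \<noteq> 1" and "b \<noteq> 0"
  shows "irreducible3 (gen_group {Xmat b c d, Ymat a, Ymat 1})"
  unfolding irreducible3_def
proof (intro allI impI notI)
  fix U :: "('a^3) set"
  assume "vec.subspace U \<and> vec.dim U \<in> {1, 2}"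
    and invariant: "\<forall>g\<in>gen_group {Xmat b c d, Ymat a, Ymat 1}. \<forall>v\<in>U. v v* g \<in> U"
  then have U: "vec.subspace U" and dim: "vec.dim U \<in> {1, 2}" by simp_all
  have generator: "v v* g \<in> U" if "v \<in> U" and "g \<in> {Xmat b c d, Ymat a, Ymat 1}" for v g
    using invariant that(1) gen_group.gen[OF that(2)] by blast
  have "U \<noteq> {0}" using dim by auto
  then have "U = UNIV"
    using U generator assms by (intro invariant_subspace_eq_UNIV[of U b c d a]) simp_all
  then have "vec.dim U = 3" by (simp add: card_cart_basis)
  then show False using dim by simp
qed

theorem lemma2p5:
  fixes a b :: "'a::{field,finite}" and p f q :: nat
  assumes "prime p" and "odd p" and "q = p ^ f" and "q \<ge> 5"
    and "CARD('a) = q ^ 2"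
    and "b \<noteq> 0" and "b + b ^ q = 1" and "b \<noteq> b ^ q"
    and "a \<noteq> 0" and "elem_order a = q - 1"
    and "\<forall>i \<in> {0, f div gcd 3 f, 2 * f div gcd 3 f}.
           (a + inverse a + 1) ^ (p ^ i) \<noteq> a + inverse a * b ^ (q + 1)"
    and "\<forall>i \<in> {0, f div gcd 3 f, 2 * f div gcd 3 f}.
           (a + inverse a + 1) ^ (p ^ i) \<noteq> 1 + b ^ (q + 1)"
    and "a + inverse a * b ^ (q + 1) \<noteq> 1 + b ^ (q + 1)"
  shows "gen_group {vector [vector [- (b ^ q), b, b ^ (q + 1)], vector [1, 0, b ^ q], vector [1, 1, - b]],
                    vector [vector [0, 0, a], vector [0, -1, 0], vector [inverse a, 0, 0]],
                    vector [vector [0, 0, 1], vector [0, -1, 0], vector [1, 0, 0]]} \<subseteq> SU3 q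
       \<and> irreducible3 (gen_group {vector [vector [- (b ^ q), b, b ^ (q + 1)], vector [1, 0, b ^ q], vector [1, 1, - b]],
                    vector [vector [0, 0, a], vector [0, -1, 0], vector [inverse a, 0, 0]],
                    vector [vector [0, 0, 1], vector [0, -1, 0], vector [1, 0, 0]]})"
proof -
  \<comment> \<open>Only a \<noteq> 0, a^2 \<noteq> 1 and b \<noteq> 0 matter for irreducibility.\<close>
  have generators: "{vector [vector [- (b ^ q), b, b ^ (q + 1)], vector [1, 0, b ^ q], vector [1, 1, - b]],
                    vector [vector [0, 0, a], vector [0, -1, 0], vector [inverse a, 0, 0]],
                    vector [vector [0, 0, 1], vector [0, -1, 0], vector [1, 0, 0]]}
      = {Xmat b (b ^ q) (b * b ^ q), Ymat a, Ymat 1 :: 'a^3^3}"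
    by (simp add: Xmat_def Ymat_def)
  have "odd q" using assms(2,3) by simp
  have "CARD('a) = p ^ (2 * f)"
    using assms(3,5) by (simp add: power_mult mult.commute)
  then have frobenius_additive: "(x + y) ^ q = x ^ q + y ^ q" for x y :: 'a
    unfolding assms(3) by (rule add_power_prime_power_finite_field[OF assms(1)])
  have "(b ^ q) ^ q = b"
    using power_card_eq_self[of b] assms(5) by (simp add: power_mult power2_eq_square)
  have "a ^ (q - 1) = 1"
    using elem_order_power_eq_one[OF assms(9)] assms(10) by simp
  then have "a ^ q = a"
    using power_minus_mult[of q a] assms(4) by simp
  have "a * a \<noteq> 1"
    using elem_order_le[of 2 a] assms(4,10) by (auto simp: power2_eq_square)
  have "gen_group {Xmat b (b ^ q) (b * b ^ q), Ymat a, Ymat 1} \<subseteq> SU3 q"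
    using \<open>odd q\<close> assms(7,9) \<open>(b ^ q) ^ q = b\<close> \<open>a ^ q = a\<close>
    by (intro gen_group_subset_SU3 frobenius_additive)
       (auto simp: odd_pos intro: Xmat_in_SU3 Ymat_in_SU3)
  moreover have "irreducible3 (gen_group {Xmat b (b ^ q) (b * b ^ q), Ymat a, Ymat 1})"
    using assms(9) \<open>a * a \<noteq> 1\<close> assms(6) by (rule irreducible3_gen_group_Xmat_Ymat)
  ultimately show ?thesis
    unfolding generators by simp
qed

end
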